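(* Let $\mathcal{V}$ be a finite set of nodes, $\mathcal{P}$ a finite set of labels with $|\mathcal{P}|\ge 2$, and $\mathcal{E}$ a set of unordered pairs $\{i,j\}\subseteq\mathcal{V}$. Let $\theta_{ip}\in\mathbb{R}$ for $i\in\mathcal{V},p\in\mathcal{P}$, and let the pairwise potentials be associative: $\theta_{ij}(p,q)=-C_{ij,p}[p=q]$ with $C_{ij,p}\ge 0$. For $\vec{y}\in\{0,1\}^{\mathcal{V}\times\mathcal{P}}$ and $\vec{\lambda}\in\mathbb{R}^{\mathcal{V}}$ define $$L(\vec{y},\vec{\lambda})=\sum_{i\in\mathcal{V}}\sum_{p\in\mathcal{P}}\theta_{ip}y_{ip}-\sum_{\{i,j\}\in\mathcal{E}}\sum_{p\in\mathcal{P}}C_{ij,p}\,y_{ip}y_{jp}+\sum_{i\in\mathcal{V}}\lambda_i\Big(\sum_{p\in\mathcal{P}}y_{ip}-1\Big),$$ and $D(\vec{\lambda})=\min_{\vec{y}\in\{0,1\}^{\mathcal{V}\times\mathcal{P}}}L(\vec{y},\vec{\lambda})$. Fix $\vec{\lambda}^{old}\in\mathbb{R}^{\mathcal{V}}$ and a node $j\in\mathcal{V}$. For $p\in\mathcal{P}$ and $k\in\{0,1\}$ let $MM_{jp,k}=\min\{L(\vec{y},\vec{\lambda}^{old}):\vec{y}\in\{0,1\}^{\mathcal{V}\times\mathcal{P}},\ y_{jp}=k\}$ and $\delta^j_p=MM_{jp,0}-MM_{jp,1}$. Let $p^{(1)}_j\in\arg\max_{p\in\mathcal{P}}\delta^j_p$,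 $\delta^j_{(1)}=\delta^j_{p^{(1)}_j}$, and $\delta^j_{(2)}=\max_{p\in\mathcal{P}\setminus\{p^{(1)}_j\}}\delta^j_p$. Let $\Delta_j$ be any number in $[\delta^j_{(2)},\delta^j_{(1)}]$ and define $\vec{\lambda}^{new}$ by $\lambda^{new}_j=\lambda^{old}_j+\Delta_j$ and $\lambda^{new}_i=\lambda^{old}_i$ for $i\ne j$. Then $\vec{\lambda}^{new}$ maximizes $D$ with respect to the coordinate $\lambda_j$: $D(\vec{\lambda}^{new})\ge D(\vec{\lambda})$ for every $\vec{\lambda}\in\mathbb{R}^{\mathcal{V}}$ with $\lambda_i=\lambda^{old}_i$ for all $i\ne j$.
   Context: This is the setting of minimizing a pairwise energy $E(\vec x)=\sum_i\theta_i(x_i)+\sum_{\{i,j\}\in\mathcal{E}}\theta_{ij}(x_i,x_j)$ over labelings $\vec x\in\mathcal{P}^{\mathcal{V}}$, rewritten with indicator variables $y_{ip}=[x_i=p]$; $L$ is the Lagrangian obtained by relaxing the consistency constraints $\sum_p y_{ip}=1$ with multipliers $\lambda_i$, and $D$ is the corresponding Lagrangian dual function. *)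

theory Defs
  imports Complex_Main
begin

text \<open>Binary labelings y in {0,1}^(V x P), represented as real-valued functions,
  fixed to 0 outside V x P so that the set of labelings is finite.\<close>
definition binlab :: "'v set \<Rightarrow> 'p set \<Rightarrow> ('v \<Rightarrow> 'p \<Rightarrow> real) set" where
  "binlab V P = {y. \<forall>i p. y i p \<in> {0, 1} \<and> ((i \<notin> V \<or> p \<notin> P) \<longrightarrow> y i p = 0)}"

text \<open>The Lagrangian. Edges are unordered pairs e = {i,j}; the product over e is y_ip * y_jp.\<close>
definition lagr :: "'v set \<Rightarrow> 'p set \<Rightarrow> 'v set set \<Rightarrow> ('v \<Rightarrow> 'p \<Rightarrow> real)
    \<Rightarrow> ('v set \<Rightarrow> 'p \<Rightarrow> real) \<Rightarrow> ('v \<Rightarrow> 'p \<Rightarrow> real) \<Rightarrow> ('v \<Rightarrow> real) \<Rightarrow> real" where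
  "lagr V P E \<theta> C y lam =
     (\<Sum>i\<in>V. \<Sum>p\<in>P. \<theta> i p * y i p)
     - (\<Sum>e\<in>E. \<Sum>p\<in>P. C e p * (\<Prod>i\<in>e. y i p))
     + (\<Sum>i\<in>V. lam i * ((\<Sum>p\<in>P. y i p) - 1))"

definition dualfn :: "'v set \<Rightarrow> 'p set \<Rightarrow> 'v set set \<Rightarrow> ('v \<Rightarrow> 'p \<Rightarrow> real)
    \<Rightarrow> ('v set \<Rightarrow> 'p \<Rightarrow> real) \<Rightarrow> ('v \<Rightarrow> real) \<Rightarrow> real" where
  "dualfn V P E \<theta> C lam = Min ((\<lambda>y. lagr V P E \<theta> C y lam) ` binlab V P)"

definition minmarg :: "'v set \<Rightarrow> 'p set \<Rightarrow> 'v set set \<Rightarrow> ('v \<Rightarrow> 'p \<Rightarrow> real)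
    \<Rightarrow> ('v set \<Rightarrow> 'p \<Rightarrow> real) \<Rightarrow> ('v \<Rightarrow> real) \<Rightarrow> 'v \<Rightarrow> 'p \<Rightarrow> real \<Rightarrow> real" where
  "minmarg V P E \<theta> C lam j p k =
     Min ((\<lambda>y. lagr V P E \<theta> C y lam) ` {y \<in> binlab V P. y j p = k})"

definition mmdiff :: "'v set \<Rightarrow> 'p set \<Rightarrow> 'v set set \<Rightarrow> ('v \<Rightarrow> 'p \<Rightarrow> real)
    \<Rightarrow> ('v set \<Rightarrow> 'p \<Rightarrow> real) \<Rightarrow> ('v \<Rightarrow> real) \<Rightarrow> 'v \<Rightarrow> 'p \<Rightarrow> real" where
  "mmdiff V P E \<theta> C lam j p = minmarg V P E \<theta> C lam j p 0 - minmarg V P E \<theta> C lam j p 1"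

end

theory Submission
  imports Defs
begin

text \<open>Every term of the Lagrangian involves a single label p, so it is a sum of independent
  column energies, one per label, and binary labelings can be assembled column by column.
  Hence the min-marginal difference at (j, p) is the difference of the two constrained minima of
  column p alone. Raising lambda_j by Delta adds Delta * y_jp to each column; with Delta between
  the two largest differences, the column-wise minimizer switches label p1 on at j and every
  other label off. This labeling is optimal for the new multipliers and satisfies the constraint
  at j, so its Lagrangian, an upper bound for every D(lambda) with lambda = lambda_old off j,
  equals the new dual value.\<close>

definition label_energy :: "'v set \<Rightarrow> 'v set set \<Rightarrow> ('v \<Rightarrow> 'p \<Rightarrow> real)
    \<Rightarrow> ('v set \<Rightarrow> 'p \<Rightarrow> real) \<Rightarrow> ('v \<Rightarrow> real) \<Rightarrow> 'p \<Rightarrow> ('v \<Rightarrow> 'p \<Rightarrow> real) \<Rightarrow> real" where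
  "label_energy V E \<theta> C lam p y =
     (\<Sum>i\<in>V. (\<theta> i p + lam i) * y i p) - (\<Sum>e\<in>E. C e p * (\<Prod>i\<in>e. y i p))"

definition label_minmarg :: "'v set \<Rightarrow> 'p set \<Rightarrow> 'v set set \<Rightarrow> ('v \<Rightarrow> 'p \<Rightarrow> real)
    \<Rightarrow> ('v set \<Rightarrow> 'p \<Rightarrow> real) \<Rightarrow> ('v \<Rightarrow> real) \<Rightarrow> 'v \<Rightarrow> 'p \<Rightarrow> real \<Rightarrow> real" where
  "label_minmarg V P E \<theta> C lam j p k =
     Min (label_energy V E \<theta> C lam p ` {y \<in> binlab V P. y j p = k})"

definition column_splice :: "'p set \<Rightarrow> ('p \<Rightarrow> 'v \<Rightarrow> 'p \<Rightarrow> real) \<Rightarrow> 'v \<Rightarrow> 'p \<Rightarrow> real" where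
  "column_splice P Y = (\<lambda>i r. if r \<in> P then Y r i r else 0)"

lemma lagr_eq_sum_label_energy:
  assumes "finite V" "finite P"
  shows "lagr V P E \<theta> C y lam = (\<Sum>p\<in>P. label_energy V E \<theta> C lam p y) - (\<Sum>i\<in>V. lam i)"
proof -
  have "(\<Sum>i\<in>V. lam i * ((\<Sum>p\<in>P. y i p) - 1))
      = (\<Sum>p\<in>P. \<Sum>i\<in>V. lam i * y i p) - (\<Sum>i\<in>V. lam i)"
    by (simp add: right_diff_distrib sum_subtractf sum_distrib_left sum.swap[of _ V])
  then show ?thesis
    unfolding lagr_def label_energy_def
    by (simp add: sum.swap[of _ V] sum.swap[of _ E] distrib_right sum.distrib sum_subtractf)
qed

lemma label_energy_cong:
  "(\<And>i. y i p = z i p) \<Longrightarrow> label_energy V E \<theta> C lam p y = label_energy V E \<theta> C lam p z"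
  unfolding label_energy_def by simp

lemma label_energy_shift:
  assumes "finite V" "j \<in> V"
  shows "label_energy V E \<theta> C (lam(j := lam j + d)) p y = label_energy V E \<theta> C lam p y + d * y j p"
proof -
  have "(\<Sum>i\<in>V. (\<theta> i p + (lam(j := lam j + d)) i) * y i p)
      = (\<Sum>i\<in>V. (\<theta> i p + lam i) * y i p + (if i = j then d * y i p else 0))"
    by (rule sum.cong) (auto simp: algebra_simps)
  also have "\<dots> = (\<Sum>i\<in>V. (\<theta> i p + lam i) * y i p) + d * y j p"
    using assms by (simp add: sum.distrib)
  finally show ?thesis unfolding label_energy_def by simp
qed

lemma column_splice_in_binlab:
  "(\<And>r. r \<in> P \<Longrightarrow> Y r \<in> binlab V P) \<Longrightarrow> column_splice P Y \<in> binlab V P"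
  unfolding binlab_def column_splice_def by auto

lemma label_energy_column_splice:
  "r \<in> P \<Longrightarrow> label_energy V E \<theta> C lam r (column_splice P Y) = label_energy V E \<theta> C lam r (Y r)"
  by (rule label_energy_cong) (simp add: column_splice_def)

lemma lagr_column_splice:
  assumes "finite V" "finite P"
  shows "lagr V P E \<theta> C (column_splice P Y) lam
       = (\<Sum>r\<in>P. label_energy V E \<theta> C lam r (Y r)) - (\<Sum>i\<in>V. lam i)"
  using assms by (simp add: lagr_eq_sum_label_energy label_energy_column_splice)

lemma lagr_indep_of_satisfied_multiplier:
  assumes "(\<Sum>p\<in>P. y j p) = 1" and "\<forall>i\<in>V. i \<noteq> j \<longrightarrow> lam i = lam' i"
  shows "lagr V P E \<theta> C y lam = lagr V P E \<theta> C y lam'"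
proof -
  have "(\<Sum>i\<in>V. lam i * ((\<Sum>p\<in>P. y i p) - 1)) = (\<Sum>i\<in>V. lam' i * ((\<Sum>p\<in>P. y i p) - 1))"
    by (rule sum.cong) (use assms in auto)
  then show ?thesis unfolding lagr_def by simp
qed

lemma finite_binlab:
  fixes V :: "'v set" and P :: "'p set"
  assumes "finite V" "finite P"
  shows "finite (binlab V P)"
proof -
  define ind :: "('v \<times> 'p) set \<Rightarrow> 'v \<Rightarrow> 'p \<Rightarrow> real"
    where "ind = (\<lambda>S i p. if (i, p) \<in> S then 1 else 0)"
  have "binlab V P \<subseteq> ind ` Pow (V \<times> P)"
  proof
    fix y assume y: "y \<in> binlab V P"
    have y01: "y i p \<in> {0, 1} \<and> ((i \<notin> V \<or> p \<notin> P) \<longrightarrow> y i p = 0)" for i p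
      using y unfolding binlab_def by blast
    have "y = ind {(i, p). y i p = 1}"
    proof (intro ext)
      show "y i p = ind {(i, p). y i p = 1} i p" for i p
        using y01[of i p] by (auto simp: ind_def)
    qed
    moreover have "{(i, p). y i p = 1} \<subseteq> V \<times> P"
    proof (intro subsetI)
      show "x \<in> V \<times> P" if "x \<in> {(i, p). y i p = 1}" for x
        using that y01[of "fst x" "snd x"] by auto
    qed
    ultimately show "y \<in> ind ` Pow (V \<times> P)" by blast
  qed
  then show ?thesis using assms finite_subset by blast
qed

lemma binlab_indicator:
  "i \<in> V \<Longrightarrow> p \<in> P \<Longrightarrow> k \<in> {0, 1} \<Longrightarrow> (\<lambda>i' r. if i' = i \<and> r = p then k else 0) \<in> binlab V P"
  unfolding binlab_def by auto

lemma dualfn_le_lagr: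
  "finite V \<Longrightarrow> finite P \<Longrightarrow> y \<in> binlab V P \<Longrightarrow> dualfn V P E \<theta> C lam \<le> lagr V P E \<theta> C y lam"
  unfolding dualfn_def by (intro Min_le) (auto simp: finite_binlab)

lemma dualfn_eq_lagr_of_minimizer:
  assumes "finite V" "finite P" "y0 \<in> binlab V P"
    and "\<forall>y\<in>binlab V P. lagr V P E \<theta> C y0 lam \<le> lagr V P E \<theta> C y lam"
  shows "dualfn V P E \<theta> C lam = lagr V P E \<theta> C y0 lam"
  unfolding dualfn_def using assms by (intro Min_eqI) (auto simp: finite_binlab)

lemma minmarg_attained:
  assumes "finite V" "finite P" "j \<in> V" "p \<in> P" "k \<in> {0, 1}"
  obtains w where "w \<in> binlab V P" "w j p = k"
    and "\<forall>y\<in>binlab V P. y j p = k \<longrightarrow> lagr V P E \<theta> C w lam \<le> lagr V P E \<theta> C y lam"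
    and "minmarg V P E \<theta> C lam j p k = lagr V P E \<theta> C w lam"
proof -
  let ?L = "\<lambda>y. lagr V P E \<theta> C y lam" and ?S = "{y \<in> binlab V P. y j p = k}"
  have fin: "finite (?L ` ?S)" using assms by (simp add: finite_binlab)
  have "?L ` ?S \<noteq> {}" using binlab_indicator[OF assms(3-5)] by force
  then obtain w where w: "w \<in> ?S" "Min (?L ` ?S) = ?L w" using Min_in[OF fin] by auto
  have "\<forall>y\<in>?S. ?L w \<le> ?L y" using w(2) Min_le[OF fin] by force
  with w show ?thesis by (intro that[of w]) (auto simp: minmarg_def)
qed

lemma label_minmarg_le:
  assumes "finite V" "finite P" "y \<in> binlab V P" "y j p = k"
  shows "label_minmarg V P E \<theta> C lam j p k \<le> label_energy V E \<theta> C lam p y"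
  unfolding label_minmarg_def using assms by (intro Min_le) (auto simp: finite_binlab)

lemma label_minmarg_attained:
  assumes "finite V" "finite P" "j \<in> V" "p \<in> P" "k \<in> {0, 1}"
  obtains y where "y \<in> binlab V P" "y j p = k"
    and "label_energy V E \<theta> C lam p y = label_minmarg V P E \<theta> C lam j p k"
proof -
  let ?S = "{y \<in> binlab V P. y j p = k}"
  have fin: "finite (label_energy V E \<theta> C lam p ` ?S)" using assms by (simp add: finite_binlab)
  have "label_energy V E \<theta> C lam p ` ?S \<noteq> {}" using binlab_indicator[OF assms(3-5)] by force
  from Min_in[OF fin this] obtain y where "y \<in> ?S"
    "label_energy V E \<theta> C lam p y = Min (label_energy V E \<theta> C lam p ` ?S)"
    by auto
  then show ?thesis by (intro that[of y]) (simp_all add: label_minmarg_def)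
qed

text \<open>Splicing an admissible column q into a minimizer keeps it admissible.\<close>

lemma label_energy_le_of_minmarg_minimizer:
  assumes fin: "finite V" "finite P" and q: "q \<in> P"
    and w: "w \<in> binlab V P" "w j p = k"
    and w_min: "\<forall>y\<in>binlab V P. y j p = k \<longrightarrow> lagr V P E \<theta> C w lam \<le> lagr V P E \<theta> C y lam"
    and z: "z \<in> binlab V P" "q = p \<longrightarrow> z j p = k"
  shows "label_energy V E \<theta> C lam q w \<le> label_energy V E \<theta> C lam q z"
proof -
  define Y where "Y = (\<lambda>r. if r = q then z else w)"
  have "column_splice P Y \<in> binlab V P"
    using w z by (intro column_splice_in_binlab) (simp add: Y_def)
  moreover have "column_splice P Y j p = k"
    using w z q by (auto simp: column_splice_def Y_def binlab_def)
  ultimately have "lagr V P E \<theta> C w lam \<le> lagr V P E \<theta> C (column_splice P Y) lam"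
    using w_min by blast
  moreover have "(\<Sum>r\<in>P. label_energy V E \<theta> C lam r (Y r))
      = label_energy V E \<theta> C lam q z + (\<Sum>r\<in>P-{q}. label_energy V E \<theta> C lam r w)"
    using fin q by (simp add: sum.remove Y_def)
  moreover have "(\<Sum>r\<in>P. label_energy V E \<theta> C lam r w)
      = label_energy V E \<theta> C lam q w + (\<Sum>r\<in>P-{q}. label_energy V E \<theta> C lam r w)"
    using fin q by (simp add: sum.remove)
  ultimately show ?thesis
    using lagr_column_splice[OF fin, of E \<theta> C Y lam] lagr_eq_sum_label_energy[OF fin, of E \<theta> C w lam]
    by (simp add: Y_def)
qed

lemma mmdiff_eq_label_minmarg_diff:
  assumes fin: "finite V" "finite P" and j: "j \<in> V" and p: "p \<in> P"
  shows "mmdiff V P E \<theta> C lam j p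
       = label_minmarg V P E \<theta> C lam j p 0 - label_minmarg V P E \<theta> C lam j p 1"
proof -
  let ?e = "label_energy V E \<theta> C lam"
  obtain w0 where w0: "w0 \<in> binlab V P" "w0 j p = 0"
      "\<forall>y\<in>binlab V P. y j p = 0 \<longrightarrow> lagr V P E \<theta> C w0 lam \<le> lagr V P E \<theta> C y lam"
      "minmarg V P E \<theta> C lam j p 0 = lagr V P E \<theta> C w0 lam"
    using minmarg_attained[OF fin j p] by blast
  obtain w1 where w1: "w1 \<in> binlab V P" "w1 j p = 1"
      "\<forall>y\<in>binlab V P. y j p = 1 \<longrightarrow> lagr V P E \<theta> C w1 lam \<le> lagr V P E \<theta> C y lam"
      "minmarg V P E \<theta> C lam j p 1 = lagr V P E \<theta> C w1 lam"
    using minmarg_attained[OF fin j p] by blast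
  note le0 = label_energy_le_of_minmarg_minimizer[OF fin _ w0(1-3)]
  note le1 = label_energy_le_of_minmarg_minimizer[OF fin _ w1(1-3)]
  have other: "?e q w0 = ?e q w1" if "q \<in> P - {p}" for q
    using le0[of q w1] le1[of q w0] w0(1) w1(1) that by force
  have own: "?e p w = label_minmarg V P E \<theta> C lam j p k"
    if w: "w \<in> binlab V P" "w j p = k" and k: "k \<in> {0, 1}"
      and w_opt: "\<And>z. z \<in> binlab V P \<Longrightarrow> z j p = k \<Longrightarrow> ?e p w \<le> ?e p z" for w k
  proof -
    obtain z where z: "z \<in> binlab V P" "z j p = k" "?e p z = label_minmarg V P E \<theta> C lam j p k"
      using label_minmarg_attained[OF fin j p k] by blast
    have "?e p w \<le> ?e p z" using w_opt z(1,2) .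
    with z(3) label_minmarg_le[OF fin w, of E \<theta> C lam] show ?thesis by linarith
  qed
  have "mmdiff V P E \<theta> C lam j p = (\<Sum>q\<in>P. ?e q w0) - (\<Sum>q\<in>P. ?e q w1)"
    unfolding mmdiff_def using w0(4) w1(4) fin by (simp add: lagr_eq_sum_label_energy)
  also have "\<dots> = ?e p w0 - ?e p w1"
    using fin p other by (simp add: sum.remove)
  also have "\<dots> = label_minmarg V P E \<theta> C lam j p 0 - label_minmarg V P E \<theta> C lam j p 1"
    using own[OF w0(1,2)] own[OF w1(1,2)] le0[OF p] le1[OF p] by simp
  finally show ?thesis .
qed

lemma updated_minimizer_exists:
  assumes fin: "finite V" "finite P" and j: "j \<in> V" and p1: "p1 \<in> P"
    and upper: "\<Delta> \<le> mmdiff V P E \<theta> C lamold j p1"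
    and lower: "\<forall>q\<in>P - {p1}. mmdiff V P E \<theta> C lamold j q \<le> \<Delta>"
  obtains y0 where "y0 \<in> binlab V P" "(\<Sum>p\<in>P. y0 j p) = 1"
    and "\<forall>y\<in>binlab V P. lagr V P E \<theta> C y0 (lamold(j := lamold j + \<Delta>))
                          \<le> lagr V P E \<theta> C y (lamold(j := lamold j + \<Delta>))"
proof -
  let ?lamnew = "lamold(j := lamold j + \<Delta>)"
  let ?m = "label_minmarg V P E \<theta> C lamold j"
  define onehot where "onehot = (\<lambda>r. if r = p1 then 1 else 0 :: real)"
  have "\<forall>r\<in>P. \<exists>Y. Y \<in> binlab V P \<and> Y j r = onehot r
                 \<and> label_energy V E \<theta> C lamold r Y = ?m r (onehot r)"
    using label_minmarg_attained[OF fin j] by (metis insert_iff onehot_def)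
  then obtain Y where Y: "\<And>r. r \<in> P \<Longrightarrow> Y r \<in> binlab V P" "\<And>r. r \<in> P \<Longrightarrow> Y r j r = onehot r"
      "\<And>r. r \<in> P \<Longrightarrow> label_energy V E \<theta> C lamold r (Y r) = ?m r (onehot r)"
    by metis
  define y0 where "y0 = column_splice P Y"
  have y0: "y0 \<in> binlab V P" "\<And>r. r \<in> P \<Longrightarrow> y0 j r = onehot r"
    using Y by (simp_all add: y0_def column_splice_in_binlab) (simp add: column_splice_def)
  have y0_energy: "label_energy V E \<theta> C lamold r y0 = ?m r (onehot r)" if "r \<in> P" for r
    using Y(3) that by (simp add: y0_def label_energy_column_splice)
  have column_opt: "label_energy V E \<theta> C ?lamnew r y0 \<le> label_energy V E \<theta> C ?lamnew r y"
    if r: "r \<in> P" and y: "y \<in> binlab V P" for r y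
  proof -
    have "y j r \<in> {0, 1}" using y by (simp add: binlab_def)
    moreover have "?m r (y j r) \<le> label_energy V E \<theta> C lamold r y"
      using label_minmarg_le[OF fin y refl] .
    moreover have "?m r 0 - ?m r 1 = mmdiff V P E \<theta> C lamold j r"
      using mmdiff_eq_label_minmarg_diff[OF fin j r] by simp
    moreover have "r \<noteq> p1 \<Longrightarrow> mmdiff V P E \<theta> C lamold j r \<le> \<Delta>"
      using lower r by blast
    ultimately show ?thesis
      using y0_energy[OF r] y0(2)[OF r] upper
      by (auto simp: label_energy_shift[OF fin(1) j] onehot_def)
  qed
  have "(\<Sum>p\<in>P. y0 j p) = (\<Sum>p\<in>P. onehot p)" using y0(2) by simp
  also have "\<dots> = 1" using fin(2) p1 by (simp add: onehot_def)
  finally show ?thesis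
    using y0(1) column_opt fin by (intro that) (auto simp: lagr_eq_sum_label_energy intro!: sum_mono)
qed

theorem theorem1:
  fixes V :: "'v set" and P :: "'p set" and E :: "'v set set"
    and \<theta> :: "'v \<Rightarrow> 'p \<Rightarrow> real" and C :: "'v set \<Rightarrow> 'p \<Rightarrow> real"
    and lamold :: "'v \<Rightarrow> real" and j :: 'v and p1 :: 'p and \<Delta> :: real
  assumes "finite V" and "finite P" and "card P \<ge> 2"
    and "\<forall>e\<in>E. e \<subseteq> V \<and> card e = 2"
    and "\<forall>e\<in>E. \<forall>p\<in>P. C e p \<ge> 0"
    and "j \<in> V"
    and "p1 \<in> P"
    and "\<forall>p\<in>P. mmdiff V P E \<theta> C lamold j p \<le> mmdiff V P E \<theta> C lamold j p1"
    and "Max ((mmdiff V P E \<theta> C lamold j) ` (P - {p1})) \<le> \<Delta>"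
    and "\<Delta> \<le> mmdiff V P E \<theta> C lamold j p1"
  shows "\<forall>lam. (\<forall>i\<in>V. i \<noteq> j \<longrightarrow> lam i = lamold i) \<longrightarrow>
           dualfn V P E \<theta> C lam \<le> dualfn V P E \<theta> C (lamold(j := lamold j + \<Delta>))"
proof (intro allI impI)
  fix lam assume lam: "\<forall>i\<in>V. i \<noteq> j \<longrightarrow> lam i = lamold i"
  let ?lamnew = "lamold(j := lamold j + \<Delta>)"
  have "\<forall>q\<in>P - {p1}. mmdiff V P E \<theta> C lamold j q \<le> \<Delta>"
    using assms(2,9) by (meson Max_ge finite_Diff finite_imageI image_eqI order_trans)
  then obtain y0 where y0: "y0 \<in> binlab V P" "(\<Sum>p\<in>P. y0 j p) = 1"
      "\<forall>y\<in>binlab V P. lagr V P E \<theta> C y0 ?lamnew \<le> lagr V P E \<theta> C y ?lamnew"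
    using updated_minimizer_exists[OF assms(1,2,6,7,10)] by blast
  have "dualfn V P E \<theta> C lam \<le> lagr V P E \<theta> C y0 lam"
    using assms(1,2) y0(1) by (rule dualfn_le_lagr)
  also have "\<dots> = lagr V P E \<theta> C y0 ?lamnew"
    using y0(2) lam by (intro lagr_indep_of_satisfied_multiplier) auto
  also have "\<dots> = dualfn V P E \<theta> C ?lamnew"
    using assms(1,2) y0(1,3) by (rule dualfn_eq_lagr_of_minimizer[symmetric])
  finally show "dualfn V P E \<theta> C lam \<le> dualfn V P E \<theta> C ?lamnew" .
qed

end
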